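(* Let $\epsilon > 0$, $M \geq 1$, and let $I,J \subset \mathbb{R}$ be intervals with $|I| > 2M^{2}\sqrt{|J|} + 4M\epsilon$. If $F \colon Q := I \times J \to \mathbb{W}$ is a horizontal $(M,\epsilon)$-quasi-isometric embedding, then the induced map $f \colon (J,\|\cdot\|) \to (\mathbb{R},\|\cdot\|)$, $f(t) := \pi_{2}(F(y,t))$ (for any $y \in I$), is an $(M,2\epsilon)$-quasi-isometric embedding.
   Context: $\mathbb{W}$ is $\mathbb{R}^{2}$ with the metric $d_{\mathrm{par}}((y,t),(\xi,\tau)) = \max\{|y-\xi|,|t-\tau|^{1/2}\}$; $\pi_{1}(y,t) = y$, $\pi_{2}(y,t) = t$; horizontal lines in $\mathbb{W}$ are the sets $\mathbb{R} \times \{t\}$. $\|x-y\| := \sqrt{|x-y|}$ denotes the square root metric on $\mathbb{R}$. A map $F \colon (X,d) \to (Y,d')$ is an $(M,\epsilon)$-quasi-isometric embedding if $M^{-1}d(x,y) - \epsilon \leq d'(F(x),F(y)) \leq Md(x,y) + \epsilon$ for all $x,y$. For a rectangle $Q = I \times J$, a map $F \colon Q \to \mathbb{W}$ is a horizontal $(M,\epsilon)$-quasi-isometric embedding if it is an $(M,\epsilon)$-quasi-isometric embedding with respect to $d_{\mathrm{par}}$ and for every $t \in J$ there is a horizontal line $\ell_{t} \subset \mathbb{W}$ with $F(I \times \{t\}) \subset \ell_{t}$ (so $f$ is well defined). *)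

theory Defs
  imports "HOL-Analysis.Analysis"
begin

text \<open>The parabolic plane W = R^2 with the parabolic metric.\<close>
definition d_par :: "real \<times> real \<Rightarrow> real \<times> real \<Rightarrow> real" where
  "d_par p q = max \<bar>fst p - fst q\<bar> (sqrt \<bar>snd p - snd q\<bar>)"

definition d_sqrt :: "real \<Rightarrow> real \<Rightarrow> real" where
  "d_sqrt x y = sqrt \<bar>x - y\<bar>"

definition qi_embedding ::
  "real \<Rightarrow> real \<Rightarrow> 'a set \<Rightarrow> ('a \<Rightarrow> 'a \<Rightarrow> real) \<Rightarrow> ('b \<Rightarrow> 'b \<Rightarrow> real) \<Rightarrow> ('a \<Rightarrow> 'b) \<Rightarrow> bool" where
  "qi_embedding M eps A d d' F \<longleftrightarrow>
     (\<forall>x\<in>A. \<forall>y\<in>A. d x y / M - eps \<le> d' (F x) (F y) \<and> d' (F x) (F y) \<le> M * d x y + eps)"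

definition horizontal_qi_embedding ::
  "real \<Rightarrow> real \<Rightarrow> real set \<Rightarrow> real set \<Rightarrow> (real \<times> real \<Rightarrow> real \<times> real) \<Rightarrow> bool" where
  "horizontal_qi_embedding M eps I J F \<longleftrightarrow>
     qi_embedding M eps (I \<times> J) d_par d_par F \<and>
     (\<forall>t\<in>J. \<exists>s. F ` (I \<times> {t}) \<subseteq> UNIV \<times> {s})"

definition ivl_len :: "real set \<Rightarrow> ereal" where
  "ivl_len S = Sup (ereal ` S) - Inf (ereal ` S)"

definition esqrt :: "ereal \<Rightarrow> ereal" where
  "esqrt x = (case x of ereal r \<Rightarrow> ereal (sqrt r) | PInfty \<Rightarrow> \<infinity> | MInfty \<Rightarrow> 0)"

end

theory Submission
  imports Defs
begin

text \<open>
  Fix heights \<open>t, s \<in> J\<close>. The rows \<open>u \<mapsto> \<pi>\<^sub>1 F(u,t)\<close> and \<open>u \<mapsto> \<pi>\<^sub>1 F(u,s)\<close> are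
  \<open>(M,\<epsilon>)\<close>-quasi-isometric embeddings of \<open>I\<close> into \<open>\<real>\<close> that stay within
  \<open>K = M\<parallel>t - s\<parallel> + \<epsilon>\<close> of each other. Since \<open>I\<close> is long, each row spreads over more
  than \<open>2K\<close>, so the value of one row at an end point of \<open>I\<close> lies between two values of the
  other row, and a coarse intermediate value theorem yields points \<open>(u,t)\<close>, \<open>(v,s)\<close> whose
  images have first coordinates at distance at most \<open>\<epsilon>\<close>. The lower quasi-isometry
  bound for this pair then controls \<open>\<parallel>f(t) - f(s)\<parallel>\<close>, because the second coordinate of
  \<open>F\<close> does not depend on the first variable.
\<close>

lemma discrete_coarse_IVT:
  fixes p :: "nat \<Rightarrow> real"
  assumes "c \<ge> 0" "\<forall>k<n. \<bar>p (Suc k) - p k\<bar> \<le> c" "p 0 \<le> x" "x \<le> p n"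
  shows "\<exists>k\<le>n. \<bar>p k - x\<bar> \<le> c / 2"
  using assms(2-4)
proof (induction n)
  case 0
  then show ?case using assms(1) by auto
next
  case (Suc n)
  show ?case
  proof (cases "x \<le> p n")
    case True
    then show ?thesis using Suc by (metis le_Suc_eq less_Suc_eq)
  next
    case False
    then have "\<bar>p (Suc n) - x\<bar> \<le> c / 2 \<or> \<bar>p n - x\<bar> \<le> c / 2"
      using Suc.prems by force
    then show ?thesis by (metis le_Suc_eq order_refl)
  qed
qed

text \<open>Sampling \<open>f\<close> with mesh \<open>h\<close>, \<open>M h \<le> e\<close>, gives consecutive values at distance
  at most \<open>2e\<close>.\<close>
lemma coarse_IVT:
  fixes f :: "real \<Rightarrow> real"
  assumes "a \<le> b" "e > 0" "f a \<le> y" "y \<le> f b"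
    and lip: "\<forall>u\<in>{a..b}. \<forall>v\<in>{a..b}. \<bar>f u - f v\<bar> \<le> M * \<bar>u - v\<bar> + e"
  shows "\<exists>x\<in>{a..b}. \<bar>f x - y\<bar> \<le> e"
proof -
  define N :: nat where "N = nat \<lceil>(b - a) * M / e\<rceil> + 1"
  define h where "h = (b - a) / N"
  have N_pos: "real N > 0" unfolding N_def by simp
  have h_nonneg: "h \<ge> 0" unfolding h_def using assms(1) by simp
  have "(b - a) * M / e \<le> real N" unfolding N_def by linarith
  then have "(b - a) * M \<le> real N * e" using assms(2) by (simp add: field_simps)
  then have Mh: "M * h \<le> e" unfolding h_def using N_pos by (simp add: field_simps)
  define p where "p k = f (a + real k * h)" for k
  have grid: "a + real k * h \<in> {a..b}" if "k \<le> N" for k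
  proof -
    have "real k * h \<le> real N * h" using that h_nonneg by (simp add: mult_right_mono)
    also have "\<dots> = b - a" unfolding h_def using N_pos by simp
    finally show ?thesis using h_nonneg by simp
  qed
  have "\<bar>p (Suc k) - p k\<bar> \<le> 2 * e" if "k < N" for k
  proof -
    have "a + real (Suc k) * h \<in> {a..b}" "a + real k * h \<in> {a..b}"
      using grid[of "Suc k"] grid[of k] that by simp_all
    then have "\<bar>p (Suc k) - p k\<bar> \<le> M * \<bar>(a + real (Suc k) * h) - (a + real k * h)\<bar> + e"
      unfolding p_def using lip by blast
    also have "\<dots> = M * h + e" using h_nonneg by (simp add: algebra_simps)
    finally show ?thesis using Mh by simp
  qed
  moreover have "p 0 = f a" "p N = f b" unfolding p_def h_def using N_pos by simp_all
  ultimately obtain k where "k \<le> N" "\<bar>p k - y\<bar> \<le> 2 * e / 2"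
    using discrete_coarse_IVT[of "2 * e" N p y] assms(2-4) by auto
  then show ?thesis using grid[of k] unfolding p_def by auto
qed

lemma coarse_IVT_closed_segment:
  fixes f :: "real \<Rightarrow> real"
  assumes "a \<le> b" "e > 0" "y \<in> closed_segment (f a) (f b)"
    and lip: "\<forall>u\<in>{a..b}. \<forall>v\<in>{a..b}. \<bar>f u - f v\<bar> \<le> M * \<bar>u - v\<bar> + e"
  shows "\<exists>x\<in>{a..b}. \<bar>f x - y\<bar> \<le> e"
proof (cases "f a \<le> f b")
  case True
  then show ?thesis using coarse_IVT[OF assms(1,2) _ _ lip] assms(3)
    by (simp add: closed_segment_eq_real_ivl)
next
  case False
  have "\<forall>u\<in>{a..b}. \<forall>v\<in>{a..b}. \<bar>- f u - - f v\<bar> \<le> M * \<bar>u - v\<bar> + e"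
    using lip by (simp add: abs_minus_commute)
  from coarse_IVT[OF assms(1,2) _ _ this, of "- y"] False assms(3)
  show ?thesis by (simp add: closed_segment_eq_real_ivl abs_minus_commute)
qed

lemma close_pairs_interleave:
  fixes A B A' B' K :: real
  assumes "\<bar>A - A'\<bar> \<le> K" "\<bar>B - B'\<bar> \<le> K" "2 * K \<le> \<bar>B - A\<bar>"
  shows "A' \<in> closed_segment A B \<or> A \<in> closed_segment A' B'"
  using assms unfolding closed_segment_eq_real_ivl by (auto simp: abs_if split: if_splits)

lemma abs_diff_le_ivl_len:
  assumes "t \<in> J" "s \<in> J"
  shows "ereal \<bar>t - s\<bar> \<le> ivl_len J"
proof -
  have "ereal (max t s) \<le> Sup (ereal ` J)" "Inf (ereal ` J) \<le> ereal (min t s)"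
    using assms by (auto intro: Sup_upper Inf_lower simp: max_def min_def)
  then have "ereal (max t s) - ereal (min t s) \<le> Sup (ereal ` J) - Inf (ereal ` J)"
    by (intro ereal_minus_mono)
  moreover have "ereal \<bar>t - s\<bar> = ereal (max t s) - ereal (min t s)"
    by (simp add: abs_if max_def min_def)
  ultimately show ?thesis unfolding ivl_len_def by simp
qed

lemma ivl_len_le:
  assumes "I \<noteq> {}" and diff_le: "\<And>a b. a \<in> I \<Longrightarrow> b \<in> I \<Longrightarrow> b - a \<le> r"
  shows "ivl_len I \<le> ereal r"
proof -
  obtain a0 where a0: "a0 \<in> I" using assms(1) by auto
  have Sup_le: "Sup (ereal ` I) \<le> ereal (a + r)" if "a \<in> I" for a
    using diff_le[OF that] by (auto intro!: Sup_least simp: algebra_simps)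
  have "ereal a0 \<le> Sup (ereal ` I)" using a0 by (auto intro: Sup_upper)
  then obtain S where S: "Sup (ereal ` I) = ereal S"
    using Sup_le[OF a0] by (cases "Sup (ereal ` I)") auto
  have "ereal (S - r) \<le> ereal a" if "a \<in> I" for a
    using Sup_le[OF that] S by simp
  then have "ereal (S - r) \<le> Inf (ereal ` I)" by (auto intro!: Inf_greatest)
  then have "Sup (ereal ` I) - Inf (ereal ` I) \<le> ereal S - ereal (S - r)"
    using S by (intro ereal_minus_mono) auto
  then show ?thesis unfolding ivl_len_def by simp
qed

lemma ivl_len_gt_obtains_diff:
  assumes "I \<noteq> {}" "ereal r < ivl_len I"
  obtains a b where "a \<in> I" "b \<in> I" "r < b - a"
  using ivl_len_le[OF assms(1), of r] assms(2) by (meson not_le)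

lemma ereal_sqrt_le_esqrt:
  assumes "ereal x \<le> y" "x \<ge> 0"
  shows "ereal (sqrt x) \<le> esqrt y"
  using assms by (cases y) (auto simp: esqrt_def)

lemma ivl_len_gt_sqrt_bound_obtains_diff:
  assumes "ereal c * esqrt (ivl_len J) + ereal d < ivl_len I" "c \<ge> 0"
    and "I \<noteq> {}" "t \<in> J" "s \<in> J"
  obtains a b where "a \<in> I" "b \<in> I" "c * sqrt \<bar>t - s\<bar> + d < b - a"
proof -
  have "ereal (sqrt \<bar>t - s\<bar>) \<le> esqrt (ivl_len J)"
    using abs_diff_le_ivl_len[OF assms(4,5)] by (rule ereal_sqrt_le_esqrt) simp
  then have "ereal c * ereal (sqrt \<bar>t - s\<bar>) + ereal d \<le> ereal c * esqrt (ivl_len J) + ereal d"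
    using assms(2) by (intro add_right_mono ereal_mult_left_mono) simp_all
  then have "ereal (c * sqrt \<bar>t - s\<bar> + d) < ivl_len I"
    using assms(1) by simp
  with assms(3) show ?thesis using ivl_len_gt_obtains_diff that by blast
qed

lemma d_par_eq: "d_par p q = max \<bar>fst p - fst q\<bar> (d_sqrt (snd p) (snd q))"
  unfolding d_par_def d_sqrt_def ..

lemma d_sqrt_nonneg: "d_sqrt x y \<ge> 0"
  unfolding d_sqrt_def by simp

lemma horizontal_qi_embeddingD:
  assumes "horizontal_qi_embedding M \<epsilon> I J F" "p \<in> I \<times> J" "q \<in> I \<times> J"
  shows "d_par p q / M - \<epsilon> \<le> d_par (F p) (F q)" "d_par (F p) (F q) \<le> M * d_par p q + \<epsilon>"
  using assms unfolding horizontal_qi_embedding_def qi_embedding_def by blast+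

lemma horizontal_qi_embedding_snd_eq:
  assumes "horizontal_qi_embedding M \<epsilon> I J F" "u \<in> I" "v \<in> I" "t \<in> J"
  shows "snd (F (u, t)) = snd (F (v, t))"
proof -
  obtain r where "F ` (I \<times> {t}) \<subseteq> UNIV \<times> {r}"
    using assms(1,4) unfolding horizontal_qi_embedding_def by blast
  then have "F (u, t) \<in> UNIV \<times> {r}" "F (v, t) \<in> UNIV \<times> {r}" using assms(2,3) by auto
  then show ?thesis by (auto simp: mem_Times_iff)
qed

lemma horizontal_qi_embedding_row:
  assumes "horizontal_qi_embedding M \<epsilon> I J F" "t \<in> J" "u \<in> I" "v \<in> I"
  shows "\<bar>u - v\<bar> / M - \<epsilon> \<le> \<bar>fst (F (u, t)) - fst (F (v, t))\<bar>"
    and "\<bar>fst (F (u, t)) - fst (F (v, t))\<bar> \<le> M * \<bar>u - v\<bar> + \<epsilon>"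
proof -
  have "d_par (F (u, t)) (F (v, t)) = \<bar>fst (F (u, t)) - fst (F (v, t))\<bar>"
    using horizontal_qi_embedding_snd_eq[OF assms(1,3,4,2)] by (simp add: d_par_eq d_sqrt_def)
  moreover have "d_par (u, t) (v, t) = \<bar>u - v\<bar>" by (simp add: d_par_eq d_sqrt_def)
  ultimately show "\<bar>u - v\<bar> / M - \<epsilon> \<le> \<bar>fst (F (u, t)) - fst (F (v, t))\<bar>"
    and "\<bar>fst (F (u, t)) - fst (F (v, t))\<bar> \<le> M * \<bar>u - v\<bar> + \<epsilon>"
    using horizontal_qi_embeddingD[OF assms(1), of "(u, t)" "(v, t)"] assms(2-4) by auto
qed

lemma horizontal_qi_embedding_column:
  assumes "horizontal_qi_embedding M \<epsilon> I J F" "u \<in> I" "t \<in> J" "s \<in> J"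
  shows "\<bar>fst (F (u, t)) - fst (F (u, s))\<bar> \<le> M * d_sqrt t s + \<epsilon>"
    and "d_sqrt (snd (F (u, t))) (snd (F (u, s))) \<le> M * d_sqrt t s + \<epsilon>"
proof -
  have "d_par (F (u, t)) (F (u, s)) \<le> M * d_sqrt t s + \<epsilon>"
    using horizontal_qi_embeddingD(2)[OF assms(1), of "(u, t)" "(u, s)"] assms(2-4)
    by (simp add: d_par_eq d_sqrt_def)
  then show "\<bar>fst (F (u, t)) - fst (F (u, s))\<bar> \<le> M * d_sqrt t s + \<epsilon>"
    and "d_sqrt (snd (F (u, t))) (snd (F (u, s))) \<le> M * d_sqrt t s + \<epsilon>"
    by (simp_all add: d_par_eq)
qed

lemma horizontal_qi_embedding_rows_meet:
  assumes H: "horizontal_qi_embedding M \<epsilon> I J F"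
    and "M > 0" "\<epsilon> > 0" "is_interval I" "t \<in> J" "s \<in> J"
    and ab: "a \<in> I" "b \<in> I" "2 * M\<^sup>2 * d_sqrt t s + 4 * M * \<epsilon> \<le> b - a"
  obtains u v where "u \<in> I" "v \<in> I" "\<bar>fst (F (u, t)) - fst (F (v, s))\<bar> \<le> \<epsilon>"
proof -
  define g where "g r u = fst (F (u, r))" for r u
  define K where "K = M * d_sqrt t s + \<epsilon>"
  have "0 \<le> 2 * M\<^sup>2 * d_sqrt t s + 4 * M * \<epsilon>"
    using assms(2,3) d_sqrt_nonneg[of t s] by simp
  then have "a \<le> b" using ab(3) by linarith
  have sub: "{a..b} \<subseteq> I"
    using assms(4) ab(1,2) unfolding is_interval_1 by (meson atLeastAtMost_iff subsetI)
  have lip: "\<forall>u\<in>{a..b}. \<forall>v\<in>{a..b}. \<bar>g r u - g r v\<bar> \<le> M * \<bar>u - v\<bar> + \<epsilon>" if "r \<in> J" for r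
    unfolding g_def using horizontal_qi_embedding_row(2)[OF H that] sub by (meson subsetD)
  have close: "\<bar>g s c - g t c\<bar> \<le> K" if "c \<in> I" for c
    using horizontal_qi_embedding_column(1)[OF H that assms(5,6)]
    unfolding g_def K_def by (simp add: abs_minus_commute)
  have "2 * K + 2 * \<epsilon> = (2 * M\<^sup>2 * d_sqrt t s + 4 * M * \<epsilon>) / M"
    using assms(2) unfolding K_def by (simp add: field_simps power2_eq_square)
  also have "\<dots> \<le> (b - a) / M"
    using ab(3) assms(2) by (simp add: divide_right_mono)
  finally have "2 * K + 2 * \<epsilon> \<le> (b - a) / M" .
  moreover have "(b - a) / M - \<epsilon> \<le> \<bar>g s b - g s a\<bar>"
    using horizontal_qi_embedding_row(1)[OF H assms(6) ab(2,1)] \<open>a \<le> b\<close> unfolding g_def by simp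
  ultimately have spread: "2 * K \<le> \<bar>g s b - g s a\<bar>" using assms(3) by linarith
  from close_pairs_interleave[OF close[OF ab(1)] close[OF ab(2)] spread]
  show ?thesis
  proof
    assume "g t a \<in> closed_segment (g s a) (g s b)"
    then obtain v where "v \<in> {a..b}" "\<bar>g s v - g t a\<bar> \<le> \<epsilon>"
      using coarse_IVT_closed_segment[OF \<open>a \<le> b\<close> assms(3) _ lip[OF assms(6)]] by blast
    then show ?thesis using that[of a v] ab(1) sub unfolding g_def by (auto simp: abs_minus_commute)
  next
    assume "g s a \<in> closed_segment (g t a) (g t b)"
    then obtain u where "u \<in> {a..b}" "\<bar>g t u - g s a\<bar> \<le> \<epsilon>"
      using coarse_IVT_closed_segment[OF \<open>a \<le> b\<close> assms(3) _ lip[OF assms(5)]] by blast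
    then show ?thesis using that[of u a] ab(1) sub unfolding g_def by auto
  qed
qed

lemma horizontal_qi_embedding_snd_lower_bound:
  assumes H: "horizontal_qi_embedding M \<epsilon> I J F" and "M > 0" "\<epsilon> \<ge> 0"
    and "y \<in> I" "t \<in> J" "s \<in> J" "u \<in> I" "v \<in> I"
    and meet: "\<bar>fst (F (u, t)) - fst (F (v, s))\<bar> \<le> \<epsilon>"
  shows "d_sqrt t s / M - 2 * \<epsilon> \<le> d_sqrt (snd (F (y, t))) (snd (F (y, s)))"
proof -
  have "d_sqrt t s \<le> d_par (u, t) (v, s)" by (simp add: d_par_eq)
  then have "d_sqrt t s / M - \<epsilon> \<le> d_par (u, t) (v, s) / M - \<epsilon>"
    using assms(2) by (simp add: divide_right_mono)
  also have "\<dots> \<le> d_par (F (u, t)) (F (v, s))"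
    using horizontal_qi_embeddingD(1)[OF H, of "(u, t)" "(v, s)"] assms(5-8) by simp
  also have "\<dots> = max \<bar>fst (F (u, t)) - fst (F (v, s))\<bar> (d_sqrt (snd (F (y, t))) (snd (F (y, s))))"
    using horizontal_qi_embedding_snd_eq[OF H \<open>u \<in> I\<close> \<open>y \<in> I\<close> \<open>t \<in> J\<close>]
      horizontal_qi_embedding_snd_eq[OF H \<open>v \<in> I\<close> \<open>y \<in> I\<close> \<open>s \<in> J\<close>]
    by (simp add: d_par_eq)
  finally have "d_sqrt t s / M - \<epsilon>
      \<le> max \<bar>fst (F (u, t)) - fst (F (v, s))\<bar> (d_sqrt (snd (F (y, t))) (snd (F (y, s))))" .
  then show ?thesis using meet d_sqrt_nonneg[of "snd (F (y, t))" "snd (F (y, s))"] assms(3)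
    by linarith
qed

theorem lemma3p13:
  fixes M \<epsilon> :: real and I J :: "real set" and F :: "real \<times> real \<Rightarrow> real \<times> real"
  assumes "\<epsilon> > 0" and "M \<ge> 1"
    and "is_interval I" and "is_interval J"
    and "ivl_len I > ereal (2 * M\<^sup>2) * esqrt (ivl_len J) + ereal (4 * M * \<epsilon>)"
    and "horizontal_qi_embedding M \<epsilon> I J F"
  shows "\<forall>y\<in>I. qi_embedding M (2 * \<epsilon>) J d_sqrt d_sqrt (\<lambda>t. snd (F (y, t)))"
  unfolding qi_embedding_def
proof (intro ballI conjI)
  fix y t s assume "y \<in> I" "t \<in> J" "s \<in> J"
  have "M > 0" using assms(2) by simp
  have "I \<noteq> {}" using \<open>y \<in> I\<close> by blast
  then obtain a b where ab: "a \<in> I" "b \<in> I" "2 * M\<^sup>2 * d_sqrt t s + 4 * M * \<epsilon> < b - a"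
    using ivl_len_gt_sqrt_bound_obtains_diff[OF assms(5) _ _ \<open>t \<in> J\<close> \<open>s \<in> J\<close>]
    unfolding d_sqrt_def by (metis zero_le_mult_iff zero_le_numeral zero_le_power2)
  obtain u v where "u \<in> I" "v \<in> I" "\<bar>fst (F (u, t)) - fst (F (v, s))\<bar> \<le> \<epsilon>"
    using horizontal_qi_embedding_rows_meet[OF assms(6) \<open>M > 0\<close> assms(1,3) \<open>t \<in> J\<close> \<open>s \<in> J\<close>
        ab(1,2) less_imp_le[OF ab(3)]] .
  then show "d_sqrt t s / M - 2 * \<epsilon> \<le> d_sqrt (snd (F (y, t))) (snd (F (y, s)))"
    using horizontal_qi_embedding_snd_lower_bound[OF assms(6) \<open>M > 0\<close> less_imp_le[OF assms(1)]
        \<open>y \<in> I\<close> \<open>t \<in> J\<close> \<open>s \<in> J\<close>] by blast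
  show "d_sqrt (snd (F (y, t))) (snd (F (y, s))) \<le> M * d_sqrt t s + 2 * \<epsilon>"
    using horizontal_qi_embedding_column(2)[OF assms(6) \<open>y \<in> I\<close> \<open>t \<in> J\<close> \<open>s \<in> J\<close>] assms(1)
    by linarith
qed

end
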